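(* There is an absolute constant $C_3$ such that for all $p\in(0,0.1)$, with $q=-\log(1-p)$ and $B=\lfloor q^{-1}\log q^{-1}\rfloor$, every positive integer $a\le B$ satisfies $$e^{2g(aq)}\le \frac{C_3}{aq}\log q^{-1}.$$
   Context: $\beta(u)=\frac{u+\sqrt{u(4-3u)}}{2}$ and $g(z)=-\log\beta(1-e^{-z})$ for $z>0$. *)

theory Defs
  imports "HOL-Analysis.Analysis"
begin

definition beta :: "real \<Rightarrow> real" where
  "beta u = (u + sqrt (u * (4 - 3 * u))) / 2"

definition g :: "real \<Rightarrow> real" where
  "g z = - ln (beta (1 - exp (- z)))"

end

theory Submission
  imports Defs
begin

text \<open>Since \<open>\<beta>(u) \<ge> \<surd>u / 2\<close> on \<open>[0,1]\<close>, we get \<open>e^{2g(z)} = \<beta>(1 - e^{-z})^{-2} \<le> 4 / (1 - e^{-z})\<close>,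
  and \<open>1 - e^{-z} \<ge> min z 1 / 2\<close>. For \<open>z = aq \<le> log q^{-1}\<close> and \<open>log q^{-1} \<ge> 1\<close> this is
  at most \<open>(8 / aq) log q^{-1}\<close>, so \<open>C\<^sub>3 = 8\<close> works.\<close>

lemma one_minus_exp_neg_ge_half_min:
  fixes z :: real
  assumes "0 < z"
  shows "min z 1 / 2 \<le> 1 - exp (- z)"
proof (cases "z \<le> 1")
  case True
  have "exp (- z) \<le> 1 / (1 + z)"
    using exp_ge_add_one_self[of z] assms by (simp add: exp_minus frac_le inverse_eq_divide)
  also have "\<dots> \<le> 1 - z / 2"
    using True assms by (simp add: field_simps)
  finally show ?thesis using True by simp
next
  case False
  have "2 \<le> exp z"
    using exp_ge_add_one_self[of z] False by linarith
  then have "exp (- z) \<le> 1 / 2"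
    by (simp add: exp_minus inverse_eq_divide)
  then show ?thesis using False by simp
qed

lemma beta_ge_half_sqrt:
  assumes "0 \<le> u" "u \<le> 1"
  shows "sqrt u / 2 \<le> beta u"
proof -
  have "sqrt u \<le> sqrt (u * (4 - 3 * u))"
    using assms mult_left_mono[of 1 "4 - 3 * u" u] by (intro real_sqrt_le_mono) simp
  then have "sqrt u \<le> u + sqrt (u * (4 - 3 * u))"
    using assms by linarith
  then show ?thesis
    unfolding beta_def by (simp add: divide_right_mono)
qed

lemma exp_two_g_le_inverse_min:
  fixes z :: real
  assumes "0 < z"
  shows "exp (2 * g z) \<le> 8 / min z 1"
proof -
  define u where "u = 1 - exp (- z)"
  have u_ge: "min z 1 / 2 \<le> u"
    unfolding u_def using one_minus_exp_neg_ge_half_min[OF assms] .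
  have u_pos: "0 < u"
    using u_ge assms by (cases "z \<le> 1") (auto simp: min_def)
  have beta_ge: "sqrt u / 2 \<le> beta u"
    using u_pos by (intro beta_ge_half_sqrt) (auto simp: u_def)
  have beta_pos: "0 < beta u"
    using beta_ge u_pos real_sqrt_gt_zero[of u] by linarith
  have "exp (g z) = 1 / beta u"
    using beta_pos unfolding g_def u_def[symmetric] by (simp add: exp_minus inverse_eq_divide)
  then have "exp (2 * g z) = 1 / (beta u)\<^sup>2"
    by (simp add: exp_double power_one_over)
  also have "\<dots> \<le> 1 / (sqrt u / 2)\<^sup>2"
    using beta_ge u_pos beta_pos by (intro divide_left_mono power_mono) auto
  also have "\<dots> = 4 / u"
    using u_pos by (simp add: power_divide)
  also have "\<dots> \<le> 4 / (min z 1 / 2)"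
    using u_ge assms by (intro divide_left_mono) auto
  finally show ?thesis by simp
qed

lemma exp_two_g_le_log_bound:
  fixes z L :: real
  assumes "0 < z" "1 \<le> L" "z \<le> L"
  shows "exp (2 * g z) \<le> 8 / z * L"
proof -
  have "8 / min z 1 \<le> 8 / z * L"
    using assms by (cases "z \<le> 1") (auto simp: field_simps)
  then show ?thesis
    using exp_two_g_le_inverse_min[OF assms(1)] by linarith
qed

lemma neg_ln_one_minus_lt:
  fixes p :: real
  assumes "0 < p" "p < 0.1"
  shows "- ln (1 - p) < 1 / 8"
proof -
  have "- ln (1 - p) \<le> p + 2 * p\<^sup>2"
    using ln_one_minus_pos_lower_bound[of p] assms by auto
  also have "\<dots> < 1 / 8"
  proof -
    have "p * p \<le> p * 0.1"
      using assms by (intro mult_left_mono) auto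
    then show ?thesis
      using assms unfolding power2_eq_square by linarith
  qed
  finally show ?thesis .
qed

lemma one_le_ln_inverse:
  fixes q :: real
  assumes "0 < q" "q \<le> 1 / 3"
  shows "1 \<le> ln (1 / q)"
proof -
  have "exp 1 \<le> (3 :: real)"
    using exp_le by linarith
  also have "\<dots> \<le> 1 / q"
    using assms by (simp add: field_simps)
  finally show ?thesis
    using assms by (simp add: ln_ge_iff)
qed

theorem lemma11:
  "\<exists>C3::real. \<forall>p::real. 0 < p \<and> p < 0.1 \<longrightarrow>
     (let q = - ln (1 - p); B = \<lfloor>(1 / q) * ln (1 / q)\<rfloor> in
       \<forall>a::nat. 0 < a \<and> int a \<le> B \<longrightarrow>
         exp (2 * g (real a * q)) \<le> C3 / (real a * q) * ln (1 / q))"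
proof (intro exI[of _ 8] allI impI)
  fix p :: real
  assume p: "0 < p \<and> p < 0.1"
  define q where "q = - ln (1 - p)"
  have q_pos: "0 < q"
    unfolding q_def using p by simp
  have log_ge_1: "1 \<le> ln (1 / q)"
    using q_pos neg_ln_one_minus_lt[of p] p unfolding q_def by (intro one_le_ln_inverse) auto
  show "let q = - ln (1 - p); B = \<lfloor>(1 / q) * ln (1 / q)\<rfloor> in
       \<forall>a::nat. 0 < a \<and> int a \<le> B \<longrightarrow>
         exp (2 * g (real a * q)) \<le> 8 / (real a * q) * ln (1 / q)"
    unfolding Let_def q_def[symmetric]
  proof (intro allI impI)
    fix a :: nat
    assume a: "0 < a \<and> int a \<le> \<lfloor>(1 / q) * ln (1 / q)\<rfloor>"
    then have "real a * q \<le> ln (1 / q)"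
      using q_pos by (simp add: le_floor_iff field_simps)
    then show "exp (2 * g (real a * q)) \<le> 8 / (real a * q) * ln (1 / q)"
      using a q_pos log_ge_1 by (intro exp_two_g_le_log_bound) auto
  qed
qed

end
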